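(* Let $H:\underline{\mathcal Z}\to\mathcal Y$ be a linear functional that has the minimal FMP and is minimally continuous, and suppose the subspaces $\operatorname{span}(H\circ\delta^t(\mathcal B))$, $t\le0$, of $\mathcal Y$ are pairwise orthogonal. Let $(\mathbb H,\langle\cdot,\cdot\rangle_{\mathbb H})$ be the reproducing kernel Hilbert space associated to the kernel $K_H(\underline z^1,\underline z^2)=\langle H(\underline z^1),H(\underline z^2)\rangle_{\mathcal Y}$ on $\underline{\mathcal Z}$, with norm $\|\cdot\|_{\mathbb H}$. Let $T\in\mathbb Z_-$ and let $\mathbb H_T\subseteq\mathbb H$ be the subspace of all $f\in\mathbb H$ such that $f(\underline z)$ depends only on $z_T,\dots,z_0$. Let $M\in\mathbb N$, $\underline z^1,\dots,\underline z^M\in\underline{\mathcal Z}$, let $\Lambda:[0,\infty)\to[0,\infty)$ be strictly increasing and $\mathcal E:\mathbb R^M\to\mathbb R$ any function, and for $\underline z\in\underline{\mathcal Z}$ write $\tau_T(\underline z)=\sum_{t=T}^0\delta^t(z_t)$. Then $$\operatorname*{argmin}_{f\in\mathbb H}\ \mathcal E\big(f(\tau_T(\underline z^1)),\dots,f(\tau_T(\underline z^M))\big)+\Lambda(\|f\|_{\mathbb H})=\operatorname*{argmin}_{f\in\mathbb H_T}\ \mathcal E\big(f(\underline z^1),\dots,f(\underline z^M)\big)+\Lambda(\|f\|_{\mathbb H}).$$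
   Context: $(\mathcal Z,\langle\cdot,\cdot\rangle_{\mathcal Z})$ and $(\mathcal Y,\langle\cdot,\cdot\rangle_{\mathcal Y})$ are real Hilbert spaces; $\mathcal B$ is the closed unit ball of $\mathcal Z$. Let $\mathbb Z_-=\{0,-1,-2,\dots\}$; elements of $\mathcal Z^{\mathbb Z_-}$ are sequences $\underline z=(z_t)_{t\le0}$. For $t\in\mathbb Z_-$, $\delta^t:\mathcal Z\to\mathcal Z^{\mathbb Z_-}$ maps $z$ to the sequence with entry $z$ at time $t$ and $0$ elsewhere. Standing assumption: $\underline{\mathcal Z}\subseteq\mathcal Z^{\mathbb Z_-}$ is a set such that (a) $\underline{\mathcal Z}$ is convex and $\underline{\mathcal Z}=-\underline{\mathcal Z}$; (b) $\delta^t(\mathcal B)\subseteq\underline{\mathcal Z}$ for all $t\in\mathbb Z_-$; (c) for every $\underline z\in\underline{\mathcal Z}$ and $J\subseteq\mathbb Z_-$, the sequence $\sum_{t\in J}\delta^t(z_t)$ (equal to $z_t$ for $t\in J$ and $0$ elsewhere) belongs to $\underline{\mathcal Z}$. A functional $H:\underline{\mathcal Z}\to\mathcal Y$ is linear if it is the restriction of a linear map on $\operatorname{span}(\underline{\mathcal Z})$. $H$ is minimally continuous if $H\circ\delta^t:\mathcal B\to\mathcal Y$ is continuous for every $t$; $H$ has the minimal FMP if $H(\sum_{t=T}^0\delta^t(z_t))\to H(\underline z)$ as $T\to-\infty$ for every $\underline z\in\underline{\mathcal Z}$. The argmin sets are sets of minimizers (possibly empty). *)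

theory Defs
  imports "HOL-Analysis.Analysis"
begin

text \<open>Sequences indexed by the non-positive integers are represented as functions
  nat => 'z, where the value at n is the entry at time t = -n.\<close>

definition delta :: "nat \<Rightarrow> 'z::real_vector \<Rightarrow> (nat \<Rightarrow> 'z)" where
  "delta t z = (\<lambda>s. if s = t then z else 0)"

text \<open>Truncation: tau N z keeps the entries at times -N,...,0 (i.e. T = -N).\<close>
definition tau :: "nat \<Rightarrow> (nat \<Rightarrow> 'z::real_vector) \<Rightarrow> (nat \<Rightarrow> 'z)" where
  "tau N z = (\<lambda>s. if s \<le> N then z s else 0)"

definition unit_ball :: "'z::real_normed_vector set" where
  "unit_ball = cball 0 1"

definition admissible_inputs :: "(nat \<Rightarrow> 'z::real_normed_vector) set \<Rightarrow> bool" where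
  "admissible_inputs Zs \<longleftrightarrow>
     (\<forall>x\<in>Zs. \<forall>y\<in>Zs. \<forall>a::real. 0 \<le> a \<and> a \<le> 1 \<longrightarrow> (\<lambda>n. a *\<^sub>R x n + (1 - a) *\<^sub>R y n) \<in> Zs)
   \<and> (\<forall>x\<in>Zs. (\<lambda>n. - x n) \<in> Zs) \<and> (\<forall>x. (\<lambda>n. - x n) \<in> Zs \<longrightarrow> x \<in> Zs)
   \<and> (\<forall>t. delta t ` unit_ball \<subseteq> Zs)
   \<and> (\<forall>x\<in>Zs. \<forall>J::nat set. (\<lambda>s. if s \<in> J then x s else 0) \<in> Zs)"

inductive_set seq_span :: "(nat \<Rightarrow> 'z::real_vector) set \<Rightarrow> (nat \<Rightarrow> 'z) set"
  for X where
    base: "x \<in> X \<Longrightarrow> x \<in> seq_span X"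
  | zero: "(\<lambda>n. 0) \<in> seq_span X"
  | add: "x \<in> seq_span X \<Longrightarrow> y \<in> seq_span X \<Longrightarrow> (\<lambda>n. x n + y n) \<in> seq_span X"
  | scale: "x \<in> seq_span X \<Longrightarrow> (\<lambda>n. c *\<^sub>R x n) \<in> seq_span X"

definition linear_functional ::
  "(nat \<Rightarrow> 'z::real_vector) set \<Rightarrow> ((nat \<Rightarrow> 'z) \<Rightarrow> 'y::real_vector) \<Rightarrow> bool" where
  "linear_functional Zs H \<longleftrightarrow>
     (\<exists>L. (\<forall>x\<in>seq_span Zs. \<forall>y\<in>seq_span Zs. L (\<lambda>n. x n + y n) = L x + L y)
        \<and> (\<forall>x\<in>seq_span Zs. \<forall>c. L (\<lambda>n. c *\<^sub>R x n) = c *\<^sub>R L x)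
        \<and> (\<forall>z\<in>Zs. H z = L z))"

definition minimally_continuous ::
  "((nat \<Rightarrow> 'z::real_normed_vector) \<Rightarrow> 'y::topological_space) \<Rightarrow> bool" where
  "minimally_continuous H \<longleftrightarrow> (\<forall>t. continuous_on unit_ball (H \<circ> delta t))"

definition minimal_FMP ::
  "(nat \<Rightarrow> 'z::real_vector) set \<Rightarrow> ((nat \<Rightarrow> 'z) \<Rightarrow> 'y::topological_space) \<Rightarrow> bool" where
  "minimal_FMP Zs H \<longleftrightarrow> (\<forall>z\<in>Zs. (\<lambda>N. H (tau N z)) \<longlonglongrightarrow> H z)"

text \<open>Reproducing kernel Hilbert space (Hs, ip) of real functions on X with kernel K.
  Functions are extended by 0 outside X.\<close>
definition is_RKHS ::
  "'a set \<Rightarrow> ('a \<Rightarrow> 'a \<Rightarrow> real) \<Rightarrow> ('a \<Rightarrow> real) set \<Rightarrow> (('a \<Rightarrow> real) \<Rightarrow> ('a \<Rightarrow> real) \<Rightarrow> real) \<Rightarrow> bool" where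
  "is_RKHS X K Hs ip \<longleftrightarrow>
     (\<forall>f\<in>Hs. \<forall>x. x \<notin> X \<longrightarrow> f x = 0)
   \<and> (\<lambda>x. 0) \<in> Hs
   \<and> (\<forall>f\<in>Hs. \<forall>g\<in>Hs. (\<lambda>x. f x + g x) \<in> Hs)
   \<and> (\<forall>f\<in>Hs. \<forall>c. (\<lambda>x. c * f x) \<in> Hs)
   \<and> (\<forall>f\<in>Hs. \<forall>g\<in>Hs. ip f g = ip g f)
   \<and> (\<forall>f\<in>Hs. \<forall>g\<in>Hs. \<forall>h\<in>Hs. ip (\<lambda>x. f x + g x) h = ip f h + ip g h)
   \<and> (\<forall>f\<in>Hs. \<forall>g\<in>Hs. \<forall>c. ip (\<lambda>x. c * f x) g = c * ip f g)
   \<and> (\<forall>f\<in>Hs. 0 \<le> ip f f)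
   \<and> (\<forall>f\<in>Hs. ip f f = 0 \<longrightarrow> f = (\<lambda>x. 0))
   \<and> (\<forall>F. (\<forall>n. F n \<in> Hs) \<and>
          (\<forall>e>0. \<exists>N. \<forall>m\<ge>N. \<forall>n\<ge>N. sqrt (ip (\<lambda>x. F m x - F n x) (\<lambda>x. F m x - F n x)) < e)
        \<longrightarrow> (\<exists>f\<in>Hs. (\<lambda>n. sqrt (ip (\<lambda>x. F n x - f x) (\<lambda>x. F n x - f x))) \<longlonglongrightarrow> 0))
   \<and> (\<forall>y\<in>X. (\<lambda>x. if x \<in> X then K x y else 0) \<in> Hs)
   \<and> (\<forall>y\<in>X. \<forall>f\<in>Hs. ip f (\<lambda>x. if x \<in> X then K x y else 0) = f y)"

definition argmin_on :: "'a set \<Rightarrow> ('a \<Rightarrow> real) \<Rightarrow> 'a set" where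
  "argmin_on S F = {f \<in> S. \<forall>g\<in>S. F f \<le> F g}"

end

theory Submission
  imports Defs
begin

text \<open>The functions of the RKHS that depend only on the entries at times T..0 are exactly
  the functions invariant under the truncation tau; they form a closed subspace V. Orthogonality
  of the impulse responses makes the contributions of times before T orthogonal to H (tau x), and
  with the fading memory property this gives K (tau x) (tau y) = K x (tau y): the kernel sections
  at truncated inputs lie in V. Hence the orthogonal projection g of any f onto V satisfies
  g = f o tau on the inputs and has norm at most that of f, strictly smaller unless f is in V.
  The loss of the first problem only sees f o tau, so replacing f by g never increases the first
  objective and strictly decreases it unless f is in V. All its minimizers therefore lie in V,
  where the two objectives coincide.\<close>

lemma argmin_on_reduce:
  assumes "V \<subseteq> S" and "\<And>v. v \<in> V \<Longrightarrow> F v = G v"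
    and improve: "\<And>f. f \<in> S \<Longrightarrow> \<exists>g\<in>V. F g \<le> F f \<and> (f \<notin> V \<longrightarrow> F g < F f)"
  shows "argmin_on S F = argmin_on V G"
proof (intro set_eqI iffI)
  fix f assume "f \<in> argmin_on S F"
  then have f: "f \<in> S" and min: "\<And>h. h \<in> S \<Longrightarrow> F f \<le> F h"
    by (auto simp: argmin_on_def)
  have "f \<in> V"
  proof (rule ccontr)
    assume "f \<notin> V"
    then obtain g where "g \<in> V" "F g < F f"
      using improve[OF f] by blast
    then show False
      using min[of g] assms(1) by auto
  qed
  moreover have "G f \<le> G g" if "g \<in> V" for g
    using min[of g] that assms(1,2) \<open>f \<in> V\<close> by auto
  ultimately show "f \<in> argmin_on V G"
    by (simp add: argmin_on_def)
next
  fix f assume "f \<in> argmin_on V G"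
  then have f: "f \<in> V" and min: "\<And>h. h \<in> V \<Longrightarrow> G f \<le> G h"
    by (auto simp: argmin_on_def)
  have "F f \<le> F h" if h: "h \<in> S" for h
  proof -
    obtain g where "g \<in> V" "F g \<le> F h"
      using improve[OF h] by blast
    then show ?thesis
      using min[of g] assms(2) f by force
  qed
  then show "f \<in> argmin_on S F"
    using f assms(1) by (auto simp: argmin_on_def)
qed

lemma eq_0_if_quadratic_nonneg:
  fixes p q :: real
  assumes "0 \<le> q" and nonneg: "\<And>t. 0 \<le> t\<^sup>2 * q - 2 * t * p"
  shows "p = 0"
proof -
  define t where "t = p / (q + 1)"
  have p: "p = t * (q + 1)"
    using \<open>0 \<le> q\<close> by (simp add: t_def)
  have "0 \<le> t\<^sup>2 * q - 2 * t * (t * (q + 1))"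
    using nonneg[of t] by (simp only: p)
  also have "\<dots> = - (t\<^sup>2 * (q + 2))"
    by (simp add: algebra_simps power2_eq_square)
  finally have "t\<^sup>2 * (q + 2) \<le> 0"
    by simp
  then have "t = 0"
    using \<open>0 \<le> q\<close> by (smt (verit) zero_le_power2 mult_pos_pos power2_less_eq_zero_iff)
  then show ?thesis
    by (simp add: p)
qed

section \<open>Hilbert spaces of real functions\<close>

text \<open>The space is a carrier set of functions rather than a type, so the projection theorem is
  proved here by the minimizing-sequence argument.\<close>

locale hilbert_fun_space =
  fixes Hs :: "('a \<Rightarrow> real) set" and ip :: "('a \<Rightarrow> real) \<Rightarrow> ('a \<Rightarrow> real) \<Rightarrow> real"
  assumes zero_mem: "(\<lambda>x. 0) \<in> Hs"
    and add_mem: "f \<in> Hs \<Longrightarrow> g \<in> Hs \<Longrightarrow> (\<lambda>x. f x + g x) \<in> Hs"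
    and scale_mem: "f \<in> Hs \<Longrightarrow> (\<lambda>x. c * f x) \<in> Hs"
    and ip_sym: "f \<in> Hs \<Longrightarrow> g \<in> Hs \<Longrightarrow> ip f g = ip g f"
    and ip_add_left: "f \<in> Hs \<Longrightarrow> g \<in> Hs \<Longrightarrow> h \<in> Hs \<Longrightarrow>
      ip (\<lambda>x. f x + g x) h = ip f h + ip g h"
    and ip_scale_left: "f \<in> Hs \<Longrightarrow> g \<in> Hs \<Longrightarrow> ip (\<lambda>x. c * f x) g = c * ip f g"
    and ip_self_nonneg: "f \<in> Hs \<Longrightarrow> 0 \<le> ip f f"
    and ip_self_eq_0: "f \<in> Hs \<Longrightarrow> ip f f = 0 \<Longrightarrow> f = (\<lambda>x. 0)"
    and complete: "\<forall>n. F n \<in> Hs \<Longrightarrow>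
      \<forall>e>0. \<exists>N. \<forall>m\<ge>N. \<forall>n\<ge>N. sqrt (ip (\<lambda>x. F m x - F n x) (\<lambda>x. F m x - F n x)) < e \<Longrightarrow>
      \<exists>f\<in>Hs. (\<lambda>n. sqrt (ip (\<lambda>x. F n x - f x) (\<lambda>x. F n x - f x))) \<longlonglongrightarrow> 0"
begin

abbreviation hnorm :: "('a \<Rightarrow> real) \<Rightarrow> real" where
  "hnorm f \<equiv> sqrt (ip f f)"

abbreviation hdist :: "('a \<Rightarrow> real) \<Rightarrow> ('a \<Rightarrow> real) \<Rightarrow> real" where
  "hdist f g \<equiv> hnorm (\<lambda>x. f x - g x)"

lemma lincomb_mem: "f \<in> Hs \<Longrightarrow> g \<in> Hs \<Longrightarrow> (\<lambda>x. a * f x + b * g x) \<in> Hs"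
  by (intro add_mem scale_mem)

lemma diff_mem: "f \<in> Hs \<Longrightarrow> g \<in> Hs \<Longrightarrow> (\<lambda>x. f x - g x) \<in> Hs"
  using lincomb_mem[of f g 1 "-1"] by simp

lemma ip_lincomb_left: "f \<in> Hs \<Longrightarrow> g \<in> Hs \<Longrightarrow> h \<in> Hs \<Longrightarrow>
    ip (\<lambda>x. a * f x + b * g x) h = a * ip f h + b * ip g h"
  by (simp add: ip_add_left scale_mem ip_scale_left)

lemma ip_lincomb_right:
  assumes f: "f \<in> Hs" and g: "g \<in> Hs" and h: "h \<in> Hs"
  shows "ip h (\<lambda>x. a * f x + b * g x) = a * ip h f + b * ip h g"
proof -
  have "ip h (\<lambda>x. a * f x + b * g x) = ip (\<lambda>x. a * f x + b * g x) h"
    by (rule ip_sym[OF h lincomb_mem[OF f g]])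
  also have "\<dots> = a * ip f h + b * ip g h"
    by (rule ip_lincomb_left[OF f g h])
  finally show ?thesis
    by (simp only: ip_sym[OF f h] ip_sym[OF g h])
qed

lemma ip_lincomb_self:
  assumes f: "f \<in> Hs" and g: "g \<in> Hs"
  shows "ip (\<lambda>x. a * f x + b * g x) (\<lambda>x. a * f x + b * g x)
      = a\<^sup>2 * ip f f + 2 * a * b * ip f g + b\<^sup>2 * ip g g"
proof -
  have u: "(\<lambda>x. a * f x + b * g x) \<in> Hs"
    by (rule lincomb_mem[OF f g])
  show ?thesis
    unfolding ip_lincomb_left[OF f g u] ip_lincomb_right[OF f g f] ip_lincomb_right[OF f g g]
      ip_sym[OF g f]
    by (simp add: algebra_simps power2_eq_square)
qed

lemma ip_zero_right: "f \<in> Hs \<Longrightarrow> ip f (\<lambda>x. 0) = 0"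
  using ip_scale_left[OF zero_mem, of f 0] ip_sym[OF _ zero_mem] by simp

lemma Cauchy_Schwarz:
  assumes f: "f \<in> Hs" and g: "g \<in> Hs"
  shows "\<bar>ip f g\<bar> \<le> hnorm f * hnorm g"
proof -
  have "(ip f g)\<^sup>2 \<le> ip f f * ip g g"
  proof (cases "ip g g = 0")
    case True
    then show ?thesis
      using ip_self_eq_0[OF g] ip_zero_right[OF f] by simp
  next
    case False
    then have pos: "0 < ip g g"
      using ip_self_nonneg[OF g] by simp
    have "0 \<le> ip (\<lambda>x. ip g g * f x + (- ip f g) * g x) (\<lambda>x. ip g g * f x + (- ip f g) * g x)"
      by (intro ip_self_nonneg lincomb_mem f g)
    also have "\<dots> = (ip g g)\<^sup>2 * ip f f + 2 * ip g g * (- ip f g) * ip f g + (- ip f g)\<^sup>2 * ip g g"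
      by (rule ip_lincomb_self[OF f g])
    also have "\<dots> = ip g g * (ip g g * ip f f - (ip f g)\<^sup>2)"
      by (simp add: algebra_simps power2_eq_square)
    finally show ?thesis
      using pos by (simp add: zero_le_mult_iff mult.commute)
  qed
  then have "sqrt ((ip f g)\<^sup>2) \<le> sqrt (ip f f * ip g g)"
    by (rule real_sqrt_le_mono)
  then show ?thesis
    by (simp only: real_sqrt_abs real_sqrt_mult)
qed

lemma hnorm_add_le:
  assumes f: "f \<in> Hs" and g: "g \<in> Hs"
  shows "hnorm (\<lambda>x. f x + g x) \<le> hnorm f + hnorm g"
proof (rule real_le_lsqrt)
  have "ip (\<lambda>x. f x + g x) (\<lambda>x. f x + g x) = ip f f + 2 * ip f g + ip g g"
    using ip_lincomb_self[OF f g, of 1 1] by simp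
  also have "\<dots> \<le> (hnorm f + hnorm g)\<^sup>2"
    using Cauchy_Schwarz[OF f g] ip_self_nonneg[OF f] ip_self_nonneg[OF g]
    by (simp add: power2_sum)
  finally show "ip (\<lambda>x. f x + g x) (\<lambda>x. f x + g x) \<le> (hnorm f + hnorm g)\<^sup>2" .
qed (simp add: ip_self_nonneg f g)

lemma hdist_triangle:
  assumes "f \<in> Hs" "g \<in> Hs" "h \<in> Hs"
  shows "hdist f h \<le> hdist f g + hdist g h"
  using hnorm_add_le[OF diff_mem[of f g] diff_mem[of g h]] assms by simp

definition closed_subspace :: "('a \<Rightarrow> real) set \<Rightarrow> bool" where
  "closed_subspace V \<longleftrightarrow> V \<subseteq> Hs \<and> (\<lambda>x. 0) \<in> V
     \<and> (\<forall>u\<in>V. \<forall>v\<in>V. \<forall>a b. (\<lambda>x. a * u x + b * v x) \<in> V)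
     \<and> (\<forall>F g. range F \<subseteq> V \<longrightarrow> g \<in> Hs \<longrightarrow> (\<lambda>n. hdist (F n) g) \<longlonglongrightarrow> 0 \<longrightarrow> g \<in> V)"

lemma closed_subspaceI:
  assumes "V \<subseteq> Hs" and "(\<lambda>x. 0) \<in> V"
    and "\<And>u v a b. u \<in> V \<Longrightarrow> v \<in> V \<Longrightarrow> (\<lambda>x. a * u x + b * v x) \<in> V"
    and "\<And>F g. range F \<subseteq> V \<Longrightarrow> g \<in> Hs \<Longrightarrow> (\<lambda>n. hdist (F n) g) \<longlonglongrightarrow> 0 \<Longrightarrow> g \<in> V"
  shows "closed_subspace V"
  using assms unfolding closed_subspace_def by blast

lemma minimizing_sequence_Cauchy:
  assumes V: "closed_subspace V" and f: "f \<in> Hs" and F: "range F \<subseteq> V"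
    and lower: "\<And>v. v \<in> V \<Longrightarrow> d \<le> ip (\<lambda>x. f x - v x) (\<lambda>x. f x - v x)"
    and F_close: "\<And>n. ip (\<lambda>x. f x - F n x) (\<lambda>x. f x - F n x) < d + 1 / real (Suc n)"
  shows "\<forall>e>0. \<exists>M. \<forall>m\<ge>M. \<forall>n\<ge>M. hdist (F m) (F n) < e"
proof -
  have VH: "V \<subseteq> Hs" and Vlc: "\<And>u v a b. u \<in> V \<Longrightarrow> v \<in> V \<Longrightarrow> (\<lambda>x. a * u x + b * v x) \<in> V"
    using V unfolding closed_subspace_def by blast+
  have FV: "F n \<in> V" for n
    using F by blast
  have FH: "F n \<in> Hs" for n
    using FV VH by blast
  have parallelogram: "ip (\<lambda>x. F m x - F n x) (\<lambda>x. F m x - F n x) \<le> 2 / real (Suc m) + 2 / real (Suc n)"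
    for m n
  proof -
    define a where "a = (\<lambda>x. f x - F m x)"
    define b where "b = (\<lambda>x. f x - F n x)"
    have a: "a \<in> Hs" and b: "b \<in> Hs"
      unfolding a_def b_def by (simp_all add: diff_mem f FH)
    have mid: "(\<lambda>x. f x - (1/2 * F m x + 1/2 * F n x)) = (\<lambda>x. 1/2 * a x + 1/2 * b x)"
      by (simp add: a_def b_def algebra_simps)
    have diff: "(\<lambda>x. F m x - F n x) = (\<lambda>x. (-1) * a x + 1 * b x)"
      by (simp add: a_def b_def)
    \<comment> \<open>The midpoint of \<open>F m\<close> and \<open>F n\<close> lies in \<open>V\<close>, so its squared distance to \<open>f\<close> is at least \<open>d\<close>.\<close>
    have "d \<le> ip (\<lambda>x. 1/2 * a x + 1/2 * b x) (\<lambda>x. 1/2 * a x + 1/2 * b x)"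
      using lower[OF Vlc[OF FV FV, of "1/2" m "1/2" n]] by (simp only: mid)
    then have "4 * d \<le> ip a a + 2 * ip a b + ip b b"
      unfolding ip_lincomb_self[OF a b] by (simp add: power2_eq_square)
    moreover have "ip (\<lambda>x. F m x - F n x) (\<lambda>x. F m x - F n x) = ip a a - 2 * ip a b + ip b b"
      unfolding diff ip_lincomb_self[OF a b] by simp
    moreover have "ip a a < d + 1 / real (Suc m)" "ip b b < d + 1 / real (Suc n)"
      using F_close by (simp_all add: a_def b_def)
    ultimately show ?thesis
      by linarith
  qed
  show ?thesis
  proof (intro allI impI)
    fix e :: real
    assume "0 < e"
    obtain M :: nat where M: "4 / e\<^sup>2 < M"
      using reals_Archimedean2 by blast
    have "4 < real M * e\<^sup>2"
      using M \<open>0 < e\<close> by (simp add: field_simps)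
    also have "\<dots> < real (Suc M) * e\<^sup>2"
      using \<open>0 < e\<close> by (simp add: mult_strict_right_mono)
    finally have "4 / real (Suc M) < e\<^sup>2"
      by (simp add: field_simps)
    have "hdist (F m) (F n) < e" if "M \<le> m" "M \<le> n" for m n
    proof (rule real_less_lsqrt)
      have "2 / real (Suc m) \<le> 2 / real (Suc M)" "2 / real (Suc n) \<le> 2 / real (Suc M)"
        using that by (simp_all add: frac_le)
      then show "ip (\<lambda>x. F m x - F n x) (\<lambda>x. F m x - F n x) < e\<^sup>2"
        using parallelogram[of m n] \<open>4 / real (Suc M) < e\<^sup>2\<close> by simp
    qed (use \<open>0 < e\<close> in simp)
    then show "\<exists>M. \<forall>m\<ge>M. \<forall>n\<ge>M. hdist (F m) (F n) < e"
      by blast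
  qed
qed

lemma minimizing_sequence_exists:
  assumes V: "closed_subspace V" and f: "f \<in> Hs"
  obtains F d where "range F \<subseteq> V"
    and "\<And>v. v \<in> V \<Longrightarrow> d \<le> ip (\<lambda>x. f x - v x) (\<lambda>x. f x - v x)"
    and "\<And>n. ip (\<lambda>x. f x - F n x) (\<lambda>x. f x - F n x) < d + 1 / real (Suc n)"
proof -
  have VH: "V \<subseteq> Hs" and V0: "(\<lambda>x. 0) \<in> V"
    using V unfolding closed_subspace_def by blast+
  define D where "D = (\<lambda>v. ip (\<lambda>x. f x - v x) (\<lambda>x. f x - v x)) ` V"
  have "D \<noteq> {}"
    using V0 unfolding D_def by blast
  have "bdd_below D"
  proof (rule bdd_belowI)
    fix y assume "y \<in> D"
    then obtain v where "v \<in> V" "y = ip (\<lambda>x. f x - v x) (\<lambda>x. f x - v x)"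
      unfolding D_def by blast
    then show "0 \<le> y"
      using VH f by (simp add: ip_self_nonneg diff_mem subset_iff)
  qed
  have lower: "Inf D \<le> ip (\<lambda>x. f x - v x) (\<lambda>x. f x - v x)" if "v \<in> V" for v
    using that by (intro cInf_lower[OF _ \<open>bdd_below D\<close>]) (simp add: D_def)
  have "\<forall>n. \<exists>v. v \<in> V \<and> ip (\<lambda>x. f x - v x) (\<lambda>x. f x - v x) < Inf D + 1 / real (Suc n)"
  proof
    fix n
    obtain y where "y \<in> D" "y < Inf D + 1 / real (Suc n)"
      using cInf_lessD[OF \<open>D \<noteq> {}\<close>, of "Inf D + 1 / real (Suc n)"] by auto
    then show "\<exists>v. v \<in> V \<and> ip (\<lambda>x. f x - v x) (\<lambda>x. f x - v x) < Inf D + 1 / real (Suc n)"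
      unfolding D_def by blast
  qed
  then obtain F where "\<forall>n. F n \<in> V"
    and "\<forall>n. ip (\<lambda>x. f x - F n x) (\<lambda>x. f x - F n x) < Inf D + 1 / real (Suc n)"
    by (auto dest!: choice)
  then show ?thesis
    using that[of F "Inf D"] lower by blast
qed

lemma nearest_point_exists:
  assumes V: "closed_subspace V" and f: "f \<in> Hs"
  shows "\<exists>g\<in>V. \<forall>v\<in>V. hdist f g \<le> hdist f v"
proof -
  have VH: "V \<subseteq> Hs"
    and V_closed: "\<And>F g. range F \<subseteq> V \<Longrightarrow> g \<in> Hs \<Longrightarrow> (\<lambda>n. hdist (F n) g) \<longlonglongrightarrow> 0 \<Longrightarrow> g \<in> V"
    using V unfolding closed_subspace_def by blast+
  obtain F d where F: "range F \<subseteq> V"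
    and lower: "\<And>v. v \<in> V \<Longrightarrow> d \<le> ip (\<lambda>x. f x - v x) (\<lambda>x. f x - v x)"
    and F_close: "\<And>n. ip (\<lambda>x. f x - F n x) (\<lambda>x. f x - F n x) < d + 1 / real (Suc n)"
    using minimizing_sequence_exists[OF V f] by blast
  have FH: "F n \<in> Hs" for n
    using F VH by blast
  obtain g where g: "g \<in> Hs" and lim: "(\<lambda>n. hdist (F n) g) \<longlonglongrightarrow> 0"
    using complete[of F] FH minimizing_sequence_Cauchy[OF V f F lower F_close] by blast
  have "hdist f g \<le> sqrt d"
  proof (rule LIMSEQ_le_const)
    show "(\<lambda>n. sqrt (d + 1 / real (Suc n)) + hdist (F n) g) \<longlonglongrightarrow> sqrt d"
      using tendsto_add[OF tendsto_real_sqrt[OF LIMSEQ_inverse_real_of_nat_add[of d]] lim]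
      by (simp add: inverse_eq_divide)
    have "hdist f g \<le> sqrt (d + 1 / real (Suc n)) + hdist (F n) g" for n
    proof -
      have "hdist f (F n) \<le> sqrt (d + 1 / real (Suc n))"
        using F_close[of n] by (simp add: less_imp_le)
      then show ?thesis
        using hdist_triangle[OF f FH g, of n] by linarith
    qed
    then show "\<exists>N. \<forall>n\<ge>N. hdist f g \<le> sqrt (d + 1 / real (Suc n)) + hdist (F n) g"
      by blast
  qed
  moreover have "sqrt d \<le> hdist f v" if "v \<in> V" for v
    using lower[OF that] by simp
  moreover have "g \<in> V"
    by (rule V_closed[OF F g lim])
  ultimately show ?thesis
    by (meson order_trans)
qed

lemma nearest_point_orthogonal:
  assumes V: "closed_subspace V" and f: "f \<in> Hs" and g: "g \<in> V"
    and nearest: "\<forall>v\<in>V. hdist f g \<le> hdist f v" and v: "v \<in> V"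
  shows "ip (\<lambda>x. f x - g x) v = 0"
proof -
  have VH: "V \<subseteq> Hs" and Vlc: "\<And>u v a b. u \<in> V \<Longrightarrow> v \<in> V \<Longrightarrow> (\<lambda>x. a * u x + b * v x) \<in> V"
    using V unfolding closed_subspace_def by blast+
  have gH: "g \<in> Hs" and vH: "v \<in> Hs"
    using VH g v by blast+
  have h: "(\<lambda>x. f x - g x) \<in> Hs"
    by (rule diff_mem[OF f gH])
  have "0 \<le> t\<^sup>2 * ip v v - 2 * t * ip (\<lambda>x. f x - g x) v" for t
  proof -
    have "hdist f g \<le> hdist f (\<lambda>x. 1 * g x + t * v x)"
      by (rule bspec[OF nearest Vlc[OF g v]])
    also have "(\<lambda>x. f x - (1 * g x + t * v x)) = (\<lambda>x. 1 * (f x - g x) + (- t) * v x)"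
      by (simp add: algebra_simps)
    finally have "ip (\<lambda>x. f x - g x) (\<lambda>x. f x - g x)
        \<le> ip (\<lambda>x. 1 * (f x - g x) + (- t) * v x) (\<lambda>x. 1 * (f x - g x) + (- t) * v x)"
      by (simp only: real_sqrt_le_iff)
    then show ?thesis
      unfolding ip_lincomb_self[OF h vH] by simp
  qed
  then show ?thesis
    by (rule eq_0_if_quadratic_nonneg[OF ip_self_nonneg[OF vH]])
qed

lemma orthogonal_projection_exists:
  assumes "closed_subspace V" and "f \<in> Hs"
  shows "\<exists>g\<in>V. \<forall>v\<in>V. ip (\<lambda>x. f x - g x) v = 0"
  using nearest_point_exists[OF assms] nearest_point_orthogonal[OF assms] by blast

end

section \<open>Reproducing kernel Hilbert spaces\<close>

locale rkhs =
  fixes X :: "'a set" and K :: "'a \<Rightarrow> 'a \<Rightarrow> real"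
    and Hs :: "('a \<Rightarrow> real) set" and ip :: "('a \<Rightarrow> real) \<Rightarrow> ('a \<Rightarrow> real) \<Rightarrow> real"
  assumes is_RKHS: "is_RKHS X K Hs ip"

sublocale rkhs \<subseteq> hilbert_fun_space Hs ip
  using is_RKHS unfolding is_RKHS_def by unfold_locales blast+

context rkhs
begin

definition ksec :: "'a \<Rightarrow> 'a \<Rightarrow> real" where
  "ksec y = (\<lambda>x. if x \<in> X then K x y else 0)"

lemma ksec_mem: "y \<in> X \<Longrightarrow> ksec y \<in> Hs"
  using is_RKHS unfolding is_RKHS_def ksec_def by blast

lemma ip_ksec: "y \<in> X \<Longrightarrow> f \<in> Hs \<Longrightarrow> ip f (ksec y) = f y"
  using is_RKHS unfolding is_RKHS_def ksec_def by blast

lemma pointwise_limit: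
  assumes F: "\<And>n. F n \<in> Hs" and g: "g \<in> Hs" and y: "y \<in> X"
    and lim: "(\<lambda>n. hdist (F n) g) \<longlonglongrightarrow> 0"
  shows "(\<lambda>n. F n y) \<longlonglongrightarrow> g y"
proof -
  have bound: "\<forall>n. norm (F n y - g y) \<le> hdist (F n) g * hnorm (ksec y)"
  proof
    fix n
    have "F n y - g y = ip (\<lambda>x. F n x - g x) (ksec y)"
      by (rule ip_ksec[OF y diff_mem[OF F g], symmetric])
    then show "norm (F n y - g y) \<le> hdist (F n) g * hnorm (ksec y)"
      using Cauchy_Schwarz[OF diff_mem[OF F g] ksec_mem[OF y]] by (simp only: real_norm_def)
  qed
  have "(\<lambda>n. hdist (F n) g * hnorm (ksec y)) \<longlonglongrightarrow> 0 * hnorm (ksec y)"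
    by (rule tendsto_mult[OF lim tendsto_const])
  then have "(\<lambda>n. F n y - g y) \<longlonglongrightarrow> 0"
    by (intro Lim_null_comparison[OF always_eventually[OF bound]]) simp
  then show ?thesis
    by (simp add: LIM_zero_iff)
qed

definition invariant_functions :: "('a \<Rightarrow> 'a) \<Rightarrow> ('a \<Rightarrow> real) set" where
  "invariant_functions P = {v \<in> Hs. \<forall>x\<in>X. v (P x) = v x}"

lemma closed_subspace_invariant_functions:
  assumes P: "P ` X \<subseteq> X"
  shows "closed_subspace (invariant_functions P)"
proof (rule closed_subspaceI)
  show "invariant_functions P \<subseteq> Hs"
    by (auto simp: invariant_functions_def)
  show "(\<lambda>x. 0) \<in> invariant_functions P"
    by (simp add: invariant_functions_def zero_mem)
  show "(\<lambda>x. a * u x + b * v x) \<in> invariant_functions P"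
    if "u \<in> invariant_functions P" "v \<in> invariant_functions P" for u v a b
    using that by (simp add: invariant_functions_def lincomb_mem)
  show "g \<in> invariant_functions P"
    if F: "range F \<subseteq> invariant_functions P" and g: "g \<in> Hs"
      and lim: "(\<lambda>n. hdist (F n) g) \<longlonglongrightarrow> 0" for F g
  proof -
    have FH: "F n \<in> Hs" for n
      using F by (auto simp: invariant_functions_def)
    have "g (P x) = g x" if x: "x \<in> X" for x
    proof -
      have "(\<lambda>n. F n (P x)) = (\<lambda>n. F n x)"
        using F x by (auto simp: invariant_functions_def)
      moreover have "(\<lambda>n. F n (P x)) \<longlonglongrightarrow> g (P x)"
        using pointwise_limit[OF FH g _ lim] P x by blast
      ultimately have "(\<lambda>n. F n x) \<longlonglongrightarrow> g (P x)"
        by simp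
      then show ?thesis
        using pointwise_limit[OF FH g x lim] by (rule LIMSEQ_unique)
    qed
    then show ?thesis
      using g by (simp add: invariant_functions_def)
  qed
qed

lemma ksec_invariant:
  assumes P: "P ` X \<subseteq> X" and K: "\<forall>x\<in>X. \<forall>y\<in>X. K (P x) (P y) = K x (P y)"
    and y: "y \<in> X"
  shows "ksec (P y) \<in> invariant_functions P"
proof -
  have "ksec (P y) (P x) = ksec (P y) x" if "x \<in> X" for x
    using P K that y by (simp add: ksec_def image_subset_iff)
  then show ?thesis
    using ksec_mem[of "P y"] P y by (simp add: invariant_functions_def image_subset_iff)
qed

lemma invariant_projection:
  assumes P: "P ` X \<subseteq> X" and K: "\<forall>x\<in>X. \<forall>y\<in>X. K (P x) (P y) = K x (P y)"
    and f: "f \<in> Hs"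
  obtains g where "g \<in> invariant_functions P" and "\<And>x. x \<in> X \<Longrightarrow> g x = f (P x)"
    and "ip g g \<le> ip f f" and "f \<notin> invariant_functions P \<Longrightarrow> ip g g < ip f f"
proof -
  obtain g where gV: "g \<in> invariant_functions P"
    and orth: "\<forall>v\<in>invariant_functions P. ip (\<lambda>x. f x - g x) v = 0"
    using orthogonal_projection_exists[OF closed_subspace_invariant_functions[OF P] f] by blast
  define h where "h = (\<lambda>x. f x - g x)"
  have gH: "g \<in> Hs"
    using gV by (simp add: invariant_functions_def)
  have h: "h \<in> Hs"
    unfolding h_def by (rule diff_mem[OF f gH])
  \<comment> \<open>\<open>h\<close> is orthogonal to the invariant kernel sections \<open>ksec (P x)\<close>, so it vanishes on \<open>P ` X\<close>.\<close>
  have g_eq: "g x = f (P x)" if x: "x \<in> X" for x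
  proof -
    have "h (P x) = ip h (ksec (P x))"
      using ip_ksec[OF _ h, of "P x"] P x by (simp add: image_subset_iff)
    also have "\<dots> = 0"
      using orth ksec_invariant[OF P K x] by (simp add: h_def)
    finally have "h (P x) = 0" .
    then show ?thesis
      using gV x by (simp add: h_def invariant_functions_def)
  qed
  have pythagoras: "ip f f = ip g g + ip h h"
  proof -
    have "ip g h = 0"
      using orth gV ip_sym[OF gH h] by (simp add: h_def)
    moreover have "f = (\<lambda>x. 1 * g x + 1 * h x)"
      by (simp add: h_def)
    ultimately show ?thesis
      using ip_lincomb_self[OF gH h, of 1 1] by simp
  qed
  have h_pos: "0 < ip h h" if "f \<notin> invariant_functions P"
  proof -
    have "f \<noteq> g"
      using that gV by blast
    then have "h \<noteq> (\<lambda>x. 0)"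
      by (auto simp: h_def fun_eq_iff)
    then have "ip h h \<noteq> 0"
      using ip_self_eq_0[OF h] by blast
    then show ?thesis
      using ip_self_nonneg[OF h] by linarith
  qed
  show ?thesis
  proof (rule that[OF gV g_eq])
    show "ip g g \<le> ip f f"
      using pythagoras ip_self_nonneg[OF h] by linarith
    show "ip g g < ip f f" if "f \<notin> invariant_functions P"
      using pythagoras h_pos[OF that] by linarith
  qed
qed

lemma invariant_projection_improves:
  fixes \<Lambda> :: "real \<Rightarrow> real" and \<E> :: "real list \<Rightarrow> real"
  assumes P: "P ` X \<subseteq> X" and K: "\<forall>x\<in>X. \<forall>y\<in>X. K (P x) (P y) = K x (P y)"
    and zs: "set zs \<subseteq> X" and \<Lambda>: "strict_mono_on {0..} \<Lambda>" and f: "f \<in> Hs"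
  shows "\<exists>g\<in>invariant_functions P.
      \<E> (map (\<lambda>z. g (P z)) zs) + \<Lambda> (hnorm g) \<le> \<E> (map (\<lambda>z. f (P z)) zs) + \<Lambda> (hnorm f)
    \<and> (f \<notin> invariant_functions P \<longrightarrow>
      \<E> (map (\<lambda>z. g (P z)) zs) + \<Lambda> (hnorm g) < \<E> (map (\<lambda>z. f (P z)) zs) + \<Lambda> (hnorm f))"
proof -
  obtain g where g: "g \<in> invariant_functions P" and g_eq: "\<And>x. x \<in> X \<Longrightarrow> g x = f (P x)"
    and le: "ip g g \<le> ip f f" and less: "f \<notin> invariant_functions P \<Longrightarrow> ip g g < ip f f"
    using invariant_projection[OF P K f] by blast
  have "map (\<lambda>z. g (P z)) zs = map (\<lambda>z. f (P z)) zs"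
  proof (rule map_cong[OF refl])
    fix z assume "z \<in> set zs"
    then have "z \<in> X"
      using zs by blast
    then have "g (P z) = g z"
      using g by (simp add: invariant_functions_def)
    also have "\<dots> = f (P z)"
      by (rule g_eq[OF \<open>z \<in> X\<close>])
    finally show "g (P z) = f (P z)" .
  qed
  then have \<E>_eq: "\<E> (map (\<lambda>z. g (P z)) zs) = \<E> (map (\<lambda>z. f (P z)) zs)"
    by (simp only:)
  have "hnorm g \<in> {0..}" "hnorm f \<in> {0..}"
    using g f by (auto simp: invariant_functions_def ip_self_nonneg)
  then have "\<Lambda> (hnorm g) \<le> \<Lambda> (hnorm f)"
    and "f \<notin> invariant_functions P \<Longrightarrow> \<Lambda> (hnorm g) < \<Lambda> (hnorm f)"
    using strict_mono_on_leD[OF \<Lambda>] strict_mono_onD[OF \<Lambda>] le less by simp_all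
  then show ?thesis
    using \<E>_eq by (intro bexI[OF _ g]) (simp add: add_strict_left_mono)
qed

lemma argmin_regularized_eq_invariant:
  fixes \<Lambda> :: "real \<Rightarrow> real" and \<E> :: "real list \<Rightarrow> real"
  assumes P: "P ` X \<subseteq> X" and K: "\<forall>x\<in>X. \<forall>y\<in>X. K (P x) (P y) = K x (P y)"
    and zs: "set zs \<subseteq> X" and \<Lambda>: "strict_mono_on {0..} \<Lambda>"
  shows "argmin_on Hs (\<lambda>f. \<E> (map (\<lambda>z. f (P z)) zs) + \<Lambda> (hnorm f))
       = argmin_on (invariant_functions P) (\<lambda>f. \<E> (map (\<lambda>z. f z) zs) + \<Lambda> (hnorm f))"
proof (rule argmin_on_reduce)
  show "invariant_functions P \<subseteq> Hs"
    by (auto simp: invariant_functions_def)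
  show "\<E> (map (\<lambda>z. v (P z)) zs) + \<Lambda> (hnorm v) = \<E> (map (\<lambda>z. v z) zs) + \<Lambda> (hnorm v)"
    if "v \<in> invariant_functions P" for v
  proof -
    have "map (\<lambda>z. v (P z)) zs = map (\<lambda>z. v z) zs"
      using that zs by (intro map_cong) (auto simp: invariant_functions_def)
    then show ?thesis
      by (simp only:)
  qed
  show "\<exists>g\<in>invariant_functions P.
      \<E> (map (\<lambda>z. g (P z)) zs) + \<Lambda> (hnorm g) \<le> \<E> (map (\<lambda>z. f (P z)) zs) + \<Lambda> (hnorm f)
    \<and> (f \<notin> invariant_functions P \<longrightarrow>
      \<E> (map (\<lambda>z. g (P z)) zs) + \<Lambda> (hnorm g) < \<E> (map (\<lambda>z. f (P z)) zs) + \<Lambda> (hnorm f))"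
    if "f \<in> Hs" for f
    by (rule invariant_projection_improves[OF P K zs \<Lambda> that])
qed

end

section \<open>Truncated inputs and orthogonal impulse responses\<close>

lemma restrict_mem:
  assumes "admissible_inputs Zs" and "x \<in> Zs"
  shows "(\<lambda>s. if s \<in> J then x s else 0) \<in> Zs"
  using assms unfolding admissible_inputs_def by blast

lemma tau_mem:
  assumes "admissible_inputs Zs" and "x \<in> Zs"
  shows "tau N x \<in> Zs"
  using restrict_mem[OF assms, of "{..N}"] by (simp add: tau_def)

lemma delta_mem:
  assumes "admissible_inputs Zs" and "x \<in> Zs"
  shows "delta t (x t) \<in> Zs"
proof -
  have "delta t (x t) = (\<lambda>s. if s \<in> {t} then x s else 0)"
    by (auto simp: delta_def)
  then show ?thesis
    using restrict_mem[OF assms, of "{t}"] by (simp only:)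
qed

lemma delta_unit_ball_mem: "admissible_inputs Zs \<Longrightarrow> z \<in> unit_ball \<Longrightarrow> delta t z \<in> Zs"
  unfolding admissible_inputs_def by blast

lemma tau_invariant_iff:
  assumes "admissible_inputs Zs"
  shows "(\<forall>x\<in>Zs. f (tau N x) = f x) \<longleftrightarrow> (\<forall>x\<in>Zs. \<forall>y\<in>Zs. (\<forall>s\<le>N. x s = y s) \<longrightarrow> f x = f y)"
proof
  assume inv: "\<forall>x\<in>Zs. f (tau N x) = f x"
  show "\<forall>x\<in>Zs. \<forall>y\<in>Zs. (\<forall>s\<le>N. x s = y s) \<longrightarrow> f x = f y"
  proof (intro ballI impI)
    fix x y assume "x \<in> Zs" "y \<in> Zs" "\<forall>s\<le>N. x s = y s"
    then have "tau N x = tau N y"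
      by (simp add: tau_def fun_eq_iff)
    then show "f x = f y"
      using inv \<open>x \<in> Zs\<close> \<open>y \<in> Zs\<close> by (metis (no_types))
  qed
next
  assume agree: "\<forall>x\<in>Zs. \<forall>y\<in>Zs. (\<forall>s\<le>N. x s = y s) \<longrightarrow> f x = f y"
  show "\<forall>x\<in>Zs. f (tau N x) = f x"
  proof
    fix x assume x: "x \<in> Zs"
    have "\<forall>s\<le>N. tau N x s = x s"
      by (simp add: tau_def)
    then show "f (tau N x) = f x"
      using agree tau_mem[OF assms x] x by blast
  qed
qed

lemma tau_0: "tau 0 x = delta 0 (x 0)"
  by (auto simp: tau_def delta_def)

lemma tau_Suc: "tau (Suc N) x = (\<lambda>s. tau N x s + delta (Suc N) (x (Suc N)) s)"
  by (auto simp: tau_def delta_def)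

lemma linear_functional_add:
  "linear_functional Zs H \<Longrightarrow> x \<in> Zs \<Longrightarrow> y \<in> Zs \<Longrightarrow> (\<lambda>n. x n + y n) \<in> Zs \<Longrightarrow>
    H (\<lambda>n. x n + y n) = H x + H y"
  unfolding linear_functional_def by (metis seq_span.base)

lemma linear_functional_scale:
  "linear_functional Zs H \<Longrightarrow> x \<in> Zs \<Longrightarrow> (\<lambda>n. c *\<^sub>R x n) \<in> Zs \<Longrightarrow>
    H (\<lambda>n. c *\<^sub>R x n) = c *\<^sub>R H x"
  unfolding linear_functional_def by (metis seq_span.base)

lemma H_tau_Suc:
  assumes adm: "admissible_inputs Zs" and lin: "linear_functional Zs H" and x: "x \<in> Zs"
  shows "H (tau (Suc N) x) = H (tau N x) + H (delta (Suc N) (x (Suc N)))"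
  unfolding tau_Suc
  by (rule linear_functional_add[OF lin tau_mem[OF adm x] delta_mem[OF adm x]])
    (use tau_mem[OF adm x, of "Suc N"] in \<open>simp add: tau_Suc\<close>)

lemma H_delta_in_span:
  assumes adm: "admissible_inputs Zs" and lin: "linear_functional Zs H" and z: "delta t z \<in> Zs"
  shows "H (delta t z) \<in> span ((H \<circ> delta t) ` unit_ball)"
proof -
  define r where "r = norm z + 1"
  have "0 < r"
    by (simp add: r_def add_nonneg_pos)
  define e where "e = (1 / r) *\<^sub>R z"
  have "e \<in> unit_ball"
    using \<open>0 < r\<close> by (simp add: unit_ball_def e_def r_def)
  then have e: "delta t e \<in> Zs"
    by (rule delta_unit_ball_mem[OF adm])
  have "delta t z = (\<lambda>n. r *\<^sub>R delta t e n)"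
    using \<open>0 < r\<close> by (auto simp: delta_def e_def)
  then have "H (delta t z) = r *\<^sub>R H (delta t e)"
    using linear_functional_scale[OF lin e, of r] z by simp
  moreover have "H (delta t e) \<in> span ((H \<circ> delta t) ` unit_ball)"
    using \<open>e \<in> unit_ball\<close> by (intro span_base) auto
  ultimately show ?thesis
    by (simp add: span_scale)
qed

locale orthogonal_impulses =
  fixes Zs :: "(nat \<Rightarrow> 'z::real_normed_vector) set" and H :: "(nat \<Rightarrow> 'z) \<Rightarrow> 'y::real_inner"
  assumes adm: "admissible_inputs Zs"
    and lin: "linear_functional Zs H"
    and orth: "\<forall>s t. s \<noteq> t \<longrightarrow>
      (\<forall>u\<in>span ((H \<circ> delta s) ` unit_ball). \<forall>v\<in>span ((H \<circ> delta t) ` unit_ball). inner u v = 0)"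
begin

lemma inner_H_delta_H_delta:
  assumes "s \<noteq> t" and "delta s a \<in> Zs" and "delta t b \<in> Zs"
  shows "inner (H (delta s a)) (H (delta t b)) = 0"
  by (rule orth[rule_format, OF \<open>s \<noteq> t\<close> H_delta_in_span[OF adm lin assms(2)]
        H_delta_in_span[OF adm lin assms(3)]])

lemma inner_H_delta_H_tau:
  assumes x: "x \<in> Zs" and "N < t" and b: "delta t b \<in> Zs"
  shows "inner (H (delta t b)) (H (tau N x)) = 0"
  using \<open>N < t\<close>
proof (induction N)
  case 0
  then show ?case
    unfolding tau_0 using inner_H_delta_H_delta[OF _ b delta_mem[OF adm x]] by simp
next
  case (Suc N)
  then show ?case
    unfolding H_tau_Suc[OF adm lin x]
    using inner_H_delta_H_delta[OF _ b delta_mem[OF adm x]] by (simp add: inner_add_right)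
qed

lemma inner_H_tau_H_tau:
  assumes x: "x \<in> Zs" and y: "y \<in> Zs" and "N \<le> M"
  shows "inner (H (tau M y)) (H (tau N x)) = inner (H (tau N y)) (H (tau N x))"
  using \<open>N \<le> M\<close>
proof (induction M rule: dec_induct)
  case (step M)
  then show ?case
    unfolding H_tau_Suc[OF adm lin y]
    using inner_H_delta_H_tau[OF x _ delta_mem[OF adm y], of N "Suc M"]
    by (simp add: inner_add_left)
qed simp

lemma inner_H_H_tau:
  assumes fmp: "minimal_FMP Zs H" and x: "x \<in> Zs" and y: "y \<in> Zs"
  shows "inner (H y) (H (tau N x)) = inner (H (tau N y)) (H (tau N x))"
proof (rule LIMSEQ_unique)
  have "(\<lambda>M. H (tau M y)) \<longlonglongrightarrow> H y"
    using fmp y unfolding minimal_FMP_def by blast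
  then show "(\<lambda>M. inner (H (tau M y)) (H (tau N x))) \<longlonglongrightarrow> inner (H y) (H (tau N x))"
    by (intro tendsto_intros)
  have "\<forall>\<^sub>F M in sequentially. inner (H (tau N y)) (H (tau N x)) = inner (H (tau M y)) (H (tau N x))"
    using eventually_ge_at_top[of N] by eventually_elim (rule inner_H_tau_H_tau[OF x y, symmetric])
  then show "(\<lambda>M. inner (H (tau M y)) (H (tau N x))) \<longlonglongrightarrow> inner (H (tau N y)) (H (tau N x))"
    by (rule Lim_transform_eventually[OF tendsto_const])
qed

end

theorem proposition4p4:
  fixes Zs :: "(nat \<Rightarrow> 'z::{real_inner, complete_space}) set"
    and H :: "(nat \<Rightarrow> 'z) \<Rightarrow> 'y::{real_inner, complete_space}"
    and Hs :: "((nat \<Rightarrow> 'z) \<Rightarrow> real) set"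
    and ip :: "((nat \<Rightarrow> 'z) \<Rightarrow> real) \<Rightarrow> ((nat \<Rightarrow> 'z) \<Rightarrow> real) \<Rightarrow> real"
    and N :: nat
    and zs :: "(nat \<Rightarrow> 'z) list"
    and \<Lambda> :: "real \<Rightarrow> real"
    and \<E> :: "real list \<Rightarrow> real"
  assumes adm: "admissible_inputs Zs"
    and zs_in: "set zs \<subseteq> Zs"
    and lin: "linear_functional Zs H"
    and fmp: "minimal_FMP Zs H"
    and cont: "minimally_continuous H"
    and orth: "\<forall>s t. s \<noteq> t \<longrightarrow>
                 (\<forall>u\<in>span ((H \<circ> delta s) ` unit_ball). \<forall>v\<in>span ((H \<circ> delta t) ` unit_ball). inner u v = 0)"
    and rkhs: "is_RKHS Zs (\<lambda>x y. inner (H x) (H y)) Hs ip"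
    and \<Lambda>_nonneg: "\<forall>x\<ge>0. \<Lambda> x \<ge> 0"
    and \<Lambda>_mono: "strict_mono_on {0..} \<Lambda>"
  shows "argmin_on Hs (\<lambda>f. \<E> (map (\<lambda>z. f (tau N z)) zs) + \<Lambda> (sqrt (ip f f)))
       = argmin_on {f \<in> Hs. \<forall>x\<in>Zs. \<forall>y\<in>Zs. (\<forall>s\<le>N. x s = y s) \<longrightarrow> f x = f y}
                   (\<lambda>f. \<E> (map (\<lambda>z. f z) zs) + \<Lambda> (sqrt (ip f f)))"
proof -
  interpret rkhs Zs "\<lambda>x y. inner (H x) (H y)" Hs ip
    by (rule rkhs.intro) (rule rkhs)
  interpret orthogonal_impulses Zs H
    by (rule orthogonal_impulses.intro) (rule adm lin orth)+
  have "tau N ` Zs \<subseteq> Zs"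
    using tau_mem[OF adm] by blast
  moreover have "\<forall>x\<in>Zs. \<forall>y\<in>Zs. inner (H (tau N x)) (H (tau N y)) = inner (H x) (H (tau N y))"
    using inner_H_H_tau[OF fmp] by simp
  moreover have "invariant_functions (tau N)
      = {f \<in> Hs. \<forall>x\<in>Zs. \<forall>y\<in>Zs. (\<forall>s\<le>N. x s = y s) \<longrightarrow> f x = f y}"
    by (simp only: invariant_functions_def tau_invariant_iff[OF adm])
  ultimately show ?thesis
    using argmin_regularized_eq_invariant[OF _ _ zs_in \<Lambda>_mono] by simp
qed

end
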